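(* Let $n\ge 4$ be even, let $K_n=(V,E)$ be the complete graph on $n$ nodes and let $P_{\mathrm{perfmatch}}(n)=\operatorname{conv}\{\chi(M): M \text{ a perfect matching in } K_n\}\subseteq\mathbb{R}^E$, whose circuits are taken with respect to the linear description $$\bm{x}(\delta(S))\ge 1\ \ \text{for all } S\subset V,\ |S|\text{ odd},\ |S|\ge 3;\qquad \bm{x}(\delta(v))=1\ \ \text{for all } v\in V;\qquad \bm{x}\ge\bm{0}.$$ Then $$\mathcal{CD}(P_{\mathrm{perfmatch}}(n))=\begin{cases}1 & n=4,6,\\ 2 & n=8,\\ 1 & n\ge 10.\end{cases}$$
   Context: $\chi(M)\in\{0,1\}^E$ is the characteristic vector of $M$; $\delta(S)$ is the set of edges with exactly one endpoint in $S$, $\delta(v)=\delta(\{v\})$, and $\bm{x}(F)=\sum_{e\in F}x_e$. Circuits: for a polytope $P=\{\bm{x}: A\bm{x}=\bm{b},\ B\bm{x}\le \bm{d}\}$ given by a fixed linear system, a nonzero vector $\bm{g}$ is a circuit of $P$ if $A\bm{g}=\bm{0}$ and $\operatorname{supp}(B\bm{g})$ is inclusion-minimal among the sets $\operatorname{supp}(B\bm{y})$ with $A\bm{y}=\bm{0}$, $\bm{y}\neq\bm{0}$ (inequalities of the form $\ge$ are rewritten as $\le$). A point $\bm{x}''\in P$ is one circuit step from $\bm{x}'\in P$ if $\bm{x}''=\bm{x}'+\alpha\bm{c}$ for a circuit $\bm{c}$ and $\alpha>0$ maximal such that $\bm{x}'+\alpha\bm{c}\in P$. A circuit walk of length $l$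 from $\bm{x}'$ to $\bm{x}''$ is a sequence $\bm{x}'=\bm{z}^0,\dots,\bm{z}^l=\bm{x}''$ in $P$ with each $\bm{z}^i$ one circuit step from $\bm{z}^{i-1}$; the circuit distance is the length of a shortest such walk, and the circuit diameter $\mathcal{CD}(P)$ is the maximum circuit distance over all ordered pairs of vertices of $P$. *)

theory Defs
  imports Complex_Main
begin

text \<open>Complete graph K_n on vertex set {0..<n}; edges are 2-element subsets.
Vectors in R^E are functions from edges (nat sets) to reals, vanishing outside E.\<close>

definition Kedges :: "nat \<Rightarrow> nat set set" where
  "Kedges n = {e. \<exists>i j. i < n \<and> j < n \<and> i \<noteq> j \<and> e = {i, j}}"

definition RE :: "nat \<Rightarrow> (nat set \<Rightarrow> real) set" where
  "RE n = {x. \<forall>e. e \<notin> Kedges n \<longrightarrow> x e = 0}"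

definition cut :: "nat \<Rightarrow> nat set \<Rightarrow> nat set set" where
  "cut n S = {e \<in> Kedges n. card (e \<inter> S) = 1}"

definition xsum :: "(nat set \<Rightarrow> real) \<Rightarrow> nat set set \<Rightarrow> real" where
  "xsum x F = (\<Sum>e\<in>F. x e)"

definition perfect_matching :: "nat \<Rightarrow> nat set set \<Rightarrow> bool" where
  "perfect_matching n M \<longleftrightarrow> M \<subseteq> Kedges n \<and> (\<forall>v < n. card {e \<in> M. v \<in> e} = 1)"

definition chi :: "nat set set \<Rightarrow> (nat set \<Rightarrow> real)" where
  "chi M = (\<lambda>e. if e \<in> M then 1 else 0)"

definition conv :: "(nat set \<Rightarrow> real) set \<Rightarrow> (nat set \<Rightarrow> real) set" where
  "conv X = {x. \<exists>u. (\<forall>y\<in>X. u y \<ge> 0) \<and> sum u X = 1 \<and> x = (\<lambda>e. \<Sum>y\<in>X. u y * y e)}"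

definition P_perfmatch :: "nat \<Rightarrow> (nat set \<Rightarrow> real) set" where
  "P_perfmatch n = conv (chi ` {M. perfect_matching n M})"

definition vertex_of :: "(nat set \<Rightarrow> real) \<Rightarrow> (nat set \<Rightarrow> real) set \<Rightarrow> bool" where
  "vertex_of x P \<longleftrightarrow> x \<in> P \<and>
     \<not> (\<exists>a\<in>P. \<exists>b\<in>P. a \<noteq> b \<and> (\<exists>t::real. 0 < t \<and> t < 1 \<and> x = (\<lambda>e. (1 - t) * a e + t * b e)))"

text \<open>Odd cut sets indexing the inequalities x(delta(S)) >= 1.\<close>
definition odd_set :: "nat \<Rightarrow> nat set \<Rightarrow> bool" where
  "odd_set n S \<longleftrightarrow> S \<subset> {..<n} \<and> odd (card S) \<and> card S \<ge> 3"

text \<open>Equality part: A y = 0 means y(delta(v)) = 0 for all v.\<close>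
definition kerA :: "nat \<Rightarrow> (nat set \<Rightarrow> real) \<Rightarrow> bool" where
  "kerA n y \<longleftrightarrow> (\<forall>v < n. xsum y (cut n {v}) = 0)"

text \<open>Support of B y: rows are odd cut inequalities (Inl S) and nonnegativity (Inr e).\<close>
definition suppB :: "nat \<Rightarrow> (nat set \<Rightarrow> real) \<Rightarrow> (nat set + nat set) set" where
  "suppB n y = {Inl S | S. odd_set n S \<and> xsum y (cut n S) \<noteq> 0}
             \<union> {Inr e | e. e \<in> Kedges n \<and> y e \<noteq> 0}"

definition circuit :: "nat \<Rightarrow> (nat set \<Rightarrow> real) \<Rightarrow> bool" where
  "circuit n g \<longleftrightarrow> g \<in> RE n \<and> g \<noteq> (\<lambda>_. 0) \<and> kerA n g \<and>
     \<not> (\<exists>y \<in> RE n. y \<noteq> (\<lambda>_. 0) \<and> kerA n y \<and> suppB n y \<subset> suppB n g)"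

definition circuit_step :: "nat \<Rightarrow> (nat set \<Rightarrow> real) set \<Rightarrow> (nat set \<Rightarrow> real) \<Rightarrow> (nat set \<Rightarrow> real) \<Rightarrow> bool" where
  "circuit_step n P x' x'' \<longleftrightarrow> x' \<in> P \<and>
     (\<exists>c \<alpha>. circuit n c \<and> \<alpha> > 0 \<and> x'' = (\<lambda>e. x' e + \<alpha> * c e) \<and> x'' \<in> P \<and>
        (\<forall>\<beta>. \<beta> > \<alpha> \<longrightarrow> (\<lambda>e. x' e + \<beta> * c e) \<notin> P))"

definition circuit_walk :: "nat \<Rightarrow> (nat set \<Rightarrow> real) set \<Rightarrow> (nat set \<Rightarrow> real) \<Rightarrow> (nat set \<Rightarrow> real) \<Rightarrow> nat \<Rightarrow> bool" where
  "circuit_walk n P x' x'' l \<longleftrightarrow> (\<exists>z :: nat \<Rightarrow> (nat set \<Rightarrow> real).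
     z 0 = x' \<and> z l = x'' \<and> (\<forall>i \<le> l. z i \<in> P) \<and> (\<forall>i < l. circuit_step n P (z i) (z (Suc i))))"

definition circuit_distance :: "nat \<Rightarrow> (nat set \<Rightarrow> real) set \<Rightarrow> (nat set \<Rightarrow> real) \<Rightarrow> (nat set \<Rightarrow> real) \<Rightarrow> nat" where
  "circuit_distance n P x' x'' = (LEAST l. circuit_walk n P x' x'' l)"

definition circuit_diameter :: "nat \<Rightarrow> (nat set \<Rightarrow> real) set \<Rightarrow> nat" where
  "circuit_diameter n P = Max {circuit_distance n P x y | x y. vertex_of x P \<and> vertex_of y P}"

end

theory Submission
  imports Defs
begin

text \<open>For perfect matchings \<open>M \<noteq> N\<close> let \<open>d = \<chi>(N) - \<chi>(M)\<close>. A kernel vector \<open>y\<close>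
  whose support pattern lies inside that of \<open>d\<close> has the same weight on all \<open>M\<close>-edges of
  \<open>M \<triangle> N\<close> and the opposite weight on the \<open>N\<close>-edges, so it is a multiple of \<open>d\<close>: along an
  alternating cycle this follows from the degree equations, and between two distant parts of
  \<open>M \<triangle> N\<close> from an odd set of five vertices \<open>{p, a, M(a), b, N(b)}\<close> whose cut is tight
  for \<open>d\<close>. Such a set exists unless \<open>M \<triangle> N\<close> consists of two alternating 4-cycles covering
  all vertices, which forces \<open>n = 8\<close>. Otherwise \<open>d\<close> is a circuit, and the circuit step from
  \<open>\<chi>(M)\<close> in direction \<open>d\<close> ends exactly at \<open>\<chi>(N)\<close>. In the exceptional case the restriction
  of \<open>d\<close> to one 4-cycle has strictly smaller support, so no single step connects the two
  vertices, whereas passing through the matching that agrees with \<open>N\<close> on one 4-cycle and with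
  \<open>M\<close> on the other takes two steps.\<close>

lemma finite_Kedges: "finite (Kedges n)"
proof -
  have "Kedges n \<subseteq> Pow {..<n}" unfolding Kedges_def by auto
  thus ?thesis by (rule finite_subset) auto
qed

lemma doubleton_in_Kedges_iff: "{i, j} \<in> Kedges n \<longleftrightarrow> i < n \<and> j < n \<and> i \<noteq> j"
  unfolding Kedges_def by (auto simp: doubleton_eq_iff)

lemma Kedges_elem_lt: "e \<in> Kedges n \<Longrightarrow> v \<in> e \<Longrightarrow> v < n"
  unfolding Kedges_def by auto

lemma cut_singleton: "cut n {v} = {e \<in> Kedges n. v \<in> e}"
proof -
  have "card (e \<inter> {v}) = 1 \<longleftrightarrow> v \<in> e" for e :: "nat set"
    by (cases "v \<in> e") auto
  thus ?thesis unfolding cut_def by auto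
qed

lemma xsum_scale: "xsum (\<lambda>e. k * z e) F = k * xsum z F"
  unfolding xsum_def by (simp add: sum_distrib_left)

lemma xsum_add: "xsum (\<lambda>e. y e + z e) F = xsum y F + xsum z F"
  unfolding xsum_def by (simp add: sum.distrib)

text \<open>Double counting: every edge meeting \<open>S\<close> is counted once per endpoint in \<open>S\<close>.\<close>
lemma xsum_cut_eq:
  assumes "finite S"
  shows "xsum z (cut n S) =
    (\<Sum>v\<in>S. xsum z (cut n {v})) - 2 * (\<Sum>e\<in>{e\<in>Kedges n. e \<subseteq> S}. z e)"
proof -
  have K: "finite (Kedges n)" by (rule finite_Kedges)
  have endpoints: "(\<Sum>v\<in>S. if v \<in> e then z e else 0) =
      (if card (e \<inter> S) = 1 then z e else 0) + 2 * (if e \<subseteq> S then z e else 0)"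
    if e: "e \<in> Kedges n" for e
  proof -
    obtain i j where ij: "i \<noteq> j" "e = {i, j}" using e unfolding Kedges_def by auto
    have "(\<Sum>v\<in>S. if v \<in> e then z e else 0) = (\<Sum>v\<in>S \<inter> e. z e)"
      using sum.inter_filter[OF assms, of "\<lambda>_. z e" "\<lambda>v. v \<in> e"] by (simp add: Int_def)
    also have "\<dots> = real (card (e \<inter> S)) * z e" by (simp add: Int_commute)
    finally show ?thesis
      using ij by (cases "i \<in> S"; cases "j \<in> S"; simp add: Int_insert_left)
  qed
  have "(\<Sum>v\<in>S. xsum z (cut n {v})) = (\<Sum>v\<in>S. \<Sum>e\<in>Kedges n. if v \<in> e then z e else 0)"
    unfolding xsum_def cut_singleton by (simp add: sum.inter_filter[OF K])
  also have "\<dots> = (\<Sum>e\<in>Kedges n. \<Sum>v\<in>S. if v \<in> e then z e else 0)" by (rule sum.swap)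
  also have "\<dots> = (\<Sum>e\<in>Kedges n. if card (e \<inter> S) = 1 then z e else 0)
      + 2 * (\<Sum>e\<in>Kedges n. if e \<subseteq> S then z e else 0)"
    by (simp add: endpoints sum.distrib sum_distrib_left)
  also have "\<dots> = xsum z (cut n S) + 2 * (\<Sum>e\<in>{e\<in>Kedges n. e \<subseteq> S}. z e)"
    unfolding xsum_def cut_def by (simp only: sum.inter_filter[OF K])
  finally show ?thesis by simp
qed

lemma xsum_cut_kerA:
  assumes "kerA n z" and "S \<subseteq> {..<n}"
  shows "xsum z (cut n S) = -2 * (\<Sum>e\<in>{e\<in>Kedges n. e \<subseteq> S}. z e)"
proof -
  have "finite S" using assms(2) finite_subset by blast
  moreover have "(\<Sum>v\<in>S. xsum z (cut n {v})) = 0"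
    using assms unfolding kerA_def by (intro sum.neutral) auto
  ultimately show ?thesis using xsum_cut_eq[of S z n] by simp
qed

subsection \<open>Perfect matchings\<close>

definition partner :: "nat set set \<Rightarrow> nat \<Rightarrow> nat" where
  "partner M v = (THE u. {v, u} \<in> M)"

lemma perfect_matching_subset_Kedges: "perfect_matching n M \<Longrightarrow> M \<subseteq> Kedges n"
  unfolding perfect_matching_def by auto

lemma perfect_matching_edge_at:
  assumes "perfect_matching n M" and "v < n"
  obtains u where "u < n" "u \<noteq> v" "{v, u} \<in> M" "\<And>e. e \<in> M \<Longrightarrow> v \<in> e \<Longrightarrow> e = {v, u}"
proof -
  have "card {e \<in> M. v \<in> e} = 1" using assms unfolding perfect_matching_def by auto
  then obtain e where e: "{e \<in> M. v \<in> e} = {e}" by (auto simp: card_1_singleton_iff)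
  hence "e \<in> Kedges n" "v \<in> e" using perfect_matching_subset_Kedges[OF assms(1)] by auto
  then obtain u where "u < n" "u \<noteq> v" "e = {v, u}" unfolding Kedges_def by auto
  with e show ?thesis by (intro that) auto
qed

lemma
  assumes "perfect_matching n M" and "v < n"
  shows partner_lt: "partner M v < n"
    and partner_neq: "partner M v \<noteq> v"
    and partner_edge: "{v, partner M v} \<in> M"
    and partner_unique: "e \<in> M \<Longrightarrow> v \<in> e \<Longrightarrow> e = {v, partner M v}"
proof -
  obtain u where u: "u < n" "u \<noteq> v" "{v, u} \<in> M" "\<And>e. e \<in> M \<Longrightarrow> v \<in> e \<Longrightarrow> e = {v, u}"
    using perfect_matching_edge_at[OF assms] by metis
  have p: "partner M v = u" unfolding partner_def
  proof (rule the_equality)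
    fix w assume "{v, w} \<in> M"
    have "{v, w} = {v, u}" using u(4)[of "{v, w}"] \<open>{v, w} \<in> M\<close> by simp
    thus "w = u" using u(2) by (auto simp: doubleton_eq_iff)
  qed (fact u(3))
  show "partner M v < n" "partner M v \<noteq> v" "{v, partner M v} \<in> M"
    using u(1-3) unfolding p by simp_all
  show "e \<in> M \<Longrightarrow> v \<in> e \<Longrightarrow> e = {v, partner M v}" using u(4) unfolding p .
qed

lemma partner_eqI:
  assumes "perfect_matching n M" "v < n" "{v, u} \<in> M"
  shows "partner M v = u"
  using partner_unique[OF assms] by (auto simp: doubleton_eq_iff)

lemma partner_partner:
  assumes "perfect_matching n M" "v < n"
  shows "partner M (partner M v) = v"
  using partner_eqI[OF assms(1) partner_lt[OF assms]] partner_edge[OF assms]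
  by (simp add: insert_commute)

lemma perfect_matching_subset_imp_eq:
  assumes M: "perfect_matching n M" and N: "perfect_matching n N" and "M \<subseteq> N"
  shows "M = N"
proof (intro equalityI subsetI)
  fix e assume "e \<in> N"
  then obtain v where v: "v < n" "v \<in> e"
    using perfect_matching_subset_Kedges[OF N] unfolding Kedges_def by blast
  have "{v, partner M v} \<in> N" using partner_edge[OF M v(1)] \<open>M \<subseteq> N\<close> by blast
  hence "{v, partner M v} = {v, partner N v}" using partner_unique[OF N v(1)] by simp
  moreover have "e = {v, partner N v}" using partner_unique[OF N v(1) \<open>e \<in> N\<close> v(2)] .
  ultimately show "e \<in> M" using partner_edge[OF M v(1)] by simp
qed (use assms in blast)

lemma xsum_chi_cut_singleton:
  assumes "perfect_matching n M" and "v < n"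
  shows "xsum (chi M) (cut n {v}) = 1"
proof -
  have "xsum (chi M) (cut n {v}) = (\<Sum>e\<in>{e\<in>Kedges n. v \<in> e}. if e \<in> M then 1 else 0)"
    unfolding xsum_def chi_def cut_singleton ..
  also have "\<dots> = card {e\<in>{e\<in>Kedges n. v \<in> e}. e \<in> M}"
    by (simp add: sum.If_cases finite_Kedges Int_def)
  also have "{e\<in>{e\<in>Kedges n. v \<in> e}. e \<in> M} = {e \<in> M. v \<in> e}"
    using perfect_matching_subset_Kedges[OF assms(1)] by auto
  finally show ?thesis using assms unfolding perfect_matching_def by simp
qed

lemma chi_inject: "chi M = chi N \<longleftrightarrow> M = N"
proof
  assume "chi M = chi N"
  hence "e \<in> M \<longleftrightarrow> e \<in> N" for e using fun_cong[of "chi M" "chi N" e] unfolding chi_def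
    by (auto split: if_splits)
  thus "M = N" by blast
qed simp

definition matching_of :: "nat \<Rightarrow> (nat \<Rightarrow> nat) \<Rightarrow> nat set set" where
  "matching_of n f = {{v, f v} | v. v < n}"

lemma
  assumes f: "\<And>v. v < n \<Longrightarrow> f v < n" "\<And>v. v < n \<Longrightarrow> f v \<noteq> v"
    "\<And>v. v < n \<Longrightarrow> f (f v) = v"
  shows perfect_matching_matching_of: "perfect_matching n (matching_of n f)"
    and partner_matching_of: "v < n \<Longrightarrow> partner (matching_of n f) v = f v"
proof -
  have edges_at: "{e \<in> matching_of n f. v \<in> e} = {{v, f v}}" if v: "v < n" for v
  proof (intro equalityI subsetI)
    fix e assume "e \<in> {e \<in> matching_of n f. v \<in> e}"
    then obtain u where u: "u < n" "e = {u, f u}" "v = u \<or> v = f u"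
      unfolding matching_of_def by auto
    thus "e \<in> {{v, f v}}" using f(3)[OF u(1)] by (auto simp: insert_commute)
  qed (use v in \<open>auto simp: matching_of_def\<close>)
  have "matching_of n f \<subseteq> Kedges n"
    unfolding matching_of_def using f(1,2) by (force simp: doubleton_in_Kedges_iff)
  thus pm: "perfect_matching n (matching_of n f)"
    unfolding perfect_matching_def using edges_at by simp
  show "partner (matching_of n f) v = f v" if "v < n"
    using partner_eqI[OF pm that] that unfolding matching_of_def by auto
qed

subsection \<open>The perfect matching polytope\<close>

lemma mem_conv: "finite X \<Longrightarrow> y \<in> X \<Longrightarrow> y \<in> conv X"
  unfolding conv_def
  by (intro CollectI exI[of _ "\<lambda>y'. if y' = y then 1 else 0"])
     (auto simp: if_distrib[of "\<lambda>c. c * _"] cong: if_cong)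

lemma conv_nonneg: "x \<in> conv X \<Longrightarrow> (\<And>y. y \<in> X \<Longrightarrow> y e \<ge> 0) \<Longrightarrow> x e \<ge> 0"
  unfolding conv_def by (auto intro!: sum_nonneg)

lemma xsum_conv:
  assumes "x \<in> conv X" and "\<And>y. y \<in> X \<Longrightarrow> xsum y F = c"
  shows "xsum x F = c"
proof -
  obtain u where u: "sum u X = 1" "x = (\<lambda>e. \<Sum>y\<in>X. u y * y e)"
    using assms(1) unfolding conv_def by blast
  have "xsum x F = (\<Sum>y\<in>X. u y * xsum y F)"
    unfolding u(2) xsum_def by (subst sum.swap) (simp add: sum_distrib_left)
  also have "\<dots> = c" using assms(2) u(1) by (simp add: sum_distrib_right[symmetric])
  finally show ?thesis .
qed

lemma conv_split_off:
  assumes X: "finite X" "y0 \<in> X" and u: "\<forall>y\<in>X. u y \<ge> 0" "sum u X = 1" "u y0 < 1"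
  shows "\<exists>a\<in>conv X. (\<lambda>e. \<Sum>y\<in>X. u y * y e) = (\<lambda>e. (1 - u y0) * a e + u y0 * y0 e)"
proof -
  define t where "t = u y0"
  define w where "w y = (if y = y0 then 0 else u y / (1 - t))" for y
  define a where "a e = (\<Sum>y\<in>X. w y * y e)" for e
  have rest: "(\<Sum>y\<in>X. f y) = f y0 + (\<Sum>y\<in>X - {y0}. f y)" for f :: "_ \<Rightarrow> real"
    using sum.remove[OF X] .
  have "t < 1" using u(3) unfolding t_def .
  have "sum w X = 1" using rest[of u] rest[of w] u(2) \<open>t < 1\<close>
    by (simp add: w_def t_def sum_divide_distrib[symmetric])
  moreover have "\<forall>y\<in>X. w y \<ge> 0" using u(1) \<open>t < 1\<close> by (simp add: w_def)
  ultimately have "a \<in> conv X" unfolding conv_def a_def by blast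
  moreover have "(\<Sum>y\<in>X. u y * y e) = (1 - t) * a e + t * y0 e" for e
    using rest[of "\<lambda>y. u y * y e"] rest[of "\<lambda>y. w y * y e"] \<open>t < 1\<close>
    by (simp add: a_def w_def t_def sum_divide_distrib[symmetric])
  ultimately show ?thesis unfolding t_def by blast
qed

lemma vertex_of_conv_imp_mem:
  assumes X: "finite X" and x: "vertex_of x (conv X)"
  shows "x \<in> X"
proof -
  obtain u where u: "\<forall>y\<in>X. u y \<ge> 0" "sum u X = 1" "x = (\<lambda>e. \<Sum>y\<in>X. u y * y e)"
    using x unfolding vertex_of_def conv_def by blast
  obtain y0 where y0: "y0 \<in> X" "u y0 > 0"
    using u(1,2) by (metis less_eq_real_def sum.neutral zero_neq_one)
  have "x = y0"
  proof (cases "u y0 < 1")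
    case True
    then obtain a where a: "a \<in> conv X" "x = (\<lambda>e. (1 - u y0) * a e + u y0 * y0 e)"
      using conv_split_off[OF X y0(1) u(1,2)] u(3) by blast
    have "a = y0"
      using x a y0 True mem_conv[OF X y0(1)] unfolding vertex_of_def by blast
    thus ?thesis using a(2) by (simp add: algebra_simps)
  next
    case False
    have "sum u X = u y0 + sum u (X - {y0})" using sum.remove[OF X y0(1)] .
    moreover have "sum u (X - {y0}) \<ge> 0" using u(1) by (intro sum_nonneg) blast
    ultimately have "u y0 = 1" "sum u (X - {y0}) = 0" using False u(2) by linarith+
    hence "\<forall>y\<in>X - {y0}. u y = 0" using sum_nonneg_eq_0_iff[of "X - {y0}" u] X u(1) by simp
    hence "x e = y0 e" for e
      using sum.remove[OF X y0(1), of "\<lambda>y. u y * y e"] \<open>u y0 = 1\<close> u(3) by simp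
    thus ?thesis by blast
  qed
  thus ?thesis using y0(1) by simp
qed

lemma finite_perfect_matchings: "finite {M. perfect_matching n M}"
proof (rule finite_subset)
  show "{M. perfect_matching n M} \<subseteq> Pow (Kedges n)" unfolding perfect_matching_def by auto
qed (simp add: finite_Kedges)

lemma chi_in_P_perfmatch: "perfect_matching n M \<Longrightarrow> chi M \<in> P_perfmatch n"
  unfolding P_perfmatch_def by (rule mem_conv) (simp_all add: finite_perfect_matchings)

lemma P_perfmatch_nonneg: "x \<in> P_perfmatch n \<Longrightarrow> x e \<ge> 0"
  unfolding P_perfmatch_def by (erule conv_nonneg) (auto simp: chi_def)

lemma P_perfmatch_degree: "x \<in> P_perfmatch n \<Longrightarrow> v < n \<Longrightarrow> xsum x (cut n {v}) = 1"
  unfolding P_perfmatch_def by (erule xsum_conv) (auto intro: xsum_chi_cut_singleton)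

lemma P_perfmatch_eq_chiI:
  assumes M: "perfect_matching n M" and x: "x \<in> P_perfmatch n"
    and zero: "\<And>e. e \<notin> M \<Longrightarrow> x e = 0"
  shows "x = chi M"
proof
  fix e
  show "x e = chi M e"
  proof (cases "e \<in> M")
    case True
    then obtain v where v: "v < n" "v \<in> e"
      using perfect_matching_subset_Kedges[OF M] unfolding Kedges_def by blast
    have "(\<Sum>e'\<in>{e'\<in>Kedges n. v \<in> e'}. x e') = (\<Sum>e'\<in>{e}. x e')"
    proof (rule sum.mono_neutral_right)
      show "{e} \<subseteq> {e' \<in> Kedges n. v \<in> e'}"
        using True v perfect_matching_subset_Kedges[OF M] by auto
      show "\<forall>e'\<in>{e' \<in> Kedges n. v \<in> e'} - {e}. x e' = 0"
        using zero partner_unique[OF M v(1)] partner_unique[OF M v(1) True v(2)] by force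
    qed (simp add: finite_Kedges)
    thus ?thesis using P_perfmatch_degree[OF x v(1)] True
      unfolding xsum_def cut_singleton chi_def by simp
  qed (simp add: zero chi_def)
qed

lemma vertex_of_chi: "perfect_matching n M \<Longrightarrow> vertex_of (chi M) (P_perfmatch n)"
  unfolding vertex_of_def
proof (intro conjI notI)
  assume M: "perfect_matching n M"
  thus "chi M \<in> P_perfmatch n" by (rule chi_in_P_perfmatch)
  assume "\<exists>a\<in>P_perfmatch n. \<exists>b\<in>P_perfmatch n. a \<noteq> b \<and>
    (\<exists>t. 0 < t \<and> t < 1 \<and> chi M = (\<lambda>e. (1 - t) * a e + t * b e))"
  then obtain a b t where ab: "a \<in> P_perfmatch n" "b \<in> P_perfmatch n" "a \<noteq> b"
    "0 < t" "t < 1" "chi M = (\<lambda>e. (1 - t) * a e + t * b e)" by blast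
  have "a e = 0 \<and> b e = 0" if "e \<notin> M" for e
  proof -
    have "(1 - t) * a e + t * b e = 0" using fun_cong[OF ab(6), of e] that by (simp add: chi_def)
    moreover have "a e \<ge> 0" "b e \<ge> 0" using ab(1,2) by (simp_all add: P_perfmatch_nonneg)
    ultimately show ?thesis using ab(4,5)
      by (smt (verit) mult_nonneg_nonneg mult_pos_pos)
  qed
  hence "a = chi M" "b = chi M" using P_perfmatch_eq_chiI[OF M] ab(1,2) by blast+
  thus False using ab(3) by simp
qed

lemma vertex_of_P_perfmatch_iff:
  "vertex_of x (P_perfmatch n) \<longleftrightarrow> (\<exists>M. perfect_matching n M \<and> x = chi M)"
  using vertex_of_chi
    vertex_of_conv_imp_mem[of "chi ` {M. perfect_matching n M}" x, folded P_perfmatch_def]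
  by (auto simp: finite_perfect_matchings)

subsection \<open>Circuit walks\<close>

lemma circuit_walk_refl: "x \<in> P \<Longrightarrow> circuit_walk n P x x 0"
  unfolding circuit_walk_def by (intro exI[of _ "\<lambda>_. x"]) simp

lemma circuit_walk_0_imp_eq: "circuit_walk n P x y 0 \<Longrightarrow> x = y"
  unfolding circuit_walk_def by auto

lemma circuit_walk_1_imp_step: "circuit_walk n P x y (Suc 0) \<Longrightarrow> circuit_step n P x y"
  unfolding circuit_walk_def by auto

lemma circuit_walk_Cons:
  assumes "circuit_step n P x y" and "circuit_walk n P y z l"
  shows "circuit_walk n P x z (Suc l)"
proof -
  obtain w where w: "w 0 = y" "w l = z" "\<forall>i\<le>l. w i \<in> P" "\<forall>i<l. circuit_step n P (w i) (w (Suc i))"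
    using assms(2) unfolding circuit_walk_def by blast
  have "x \<in> P" using assms(1) unfolding circuit_step_def by simp
  show ?thesis unfolding circuit_walk_def
  proof (intro exI[of _ "\<lambda>i. if i = 0 then x else w (i - 1)"] conjI allI impI)
    show "(if i = 0 then x else w (i - 1)) \<in> P" if "i \<le> Suc l" for i
      using w(3) that \<open>x \<in> P\<close> by auto
    show "circuit_step n P (if i = 0 then x else w (i - 1))
        (if Suc i = 0 then x else w (Suc i - 1))" if "i < Suc l" for i
      using assms(1) w(1,4) that by (cases i) auto
  qed (simp_all add: w(2))
qed

lemma circuit_distance_le: "circuit_walk n P x y l \<Longrightarrow> circuit_distance n P x y \<le> l"
  unfolding circuit_distance_def by (rule Least_le)

lemma circuit_distance_eqI:
  assumes "circuit_walk n P x y l" and "\<And>l'. l' < l \<Longrightarrow> \<not> circuit_walk n P x y l'"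
  shows "circuit_distance n P x y = l"
  unfolding circuit_distance_def using assms
  by (intro Least_equality) (auto simp: not_less[symmetric])

lemma circuit_diameter_eqI:
  assumes "\<And>x y. vertex_of x P \<Longrightarrow> vertex_of y P \<Longrightarrow> circuit_distance n P x y \<le> k"
    and "vertex_of x0 P" "vertex_of y0 P" "circuit_distance n P x0 y0 = k"
  shows "circuit_diameter n P = k"
  unfolding circuit_diameter_def
proof (rule Max_eqI)
  have "{circuit_distance n P x y |x y. vertex_of x P \<and> vertex_of y P} \<subseteq> {..k}"
    using assms(1) by blast
  thus "finite {circuit_distance n P x y |x y. vertex_of x P \<and> vertex_of y P}"
    using finite_subset by blast
qed (use assms in blast)+

lemma circuit_scale:
  assumes c: "circuit n c" and k: "k \<noteq> 0"
  shows "circuit n (\<lambda>e. k * c e)"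
proof -
  have supp: "suppB n (\<lambda>e. k * c e) = suppB n c"
    unfolding suppB_def xsum_scale using k by simp
  have "(\<lambda>e. k * c e) \<noteq> (\<lambda>_. 0)" using c k unfolding circuit_def by (auto simp: fun_eq_iff)
  thus ?thesis using c unfolding circuit_def supp by (simp add: RE_def kerA_def xsum_scale)
qed

subsection \<open>Two perfect matchings\<close>

locale two_matchings =
  fixes n :: nat and M N :: "nat set set"
  assumes M: "perfect_matching n M" and N: "perfect_matching n N"
begin

abbreviation pm :: "nat \<Rightarrow> nat" where "pm \<equiv> partner M"
abbreviation pn :: "nat \<Rightarrow> nat" where "pn \<equiv> partner N"

lemmas pm_lt = partner_lt[OF M] and pn_lt = partner_lt[OF N]
  and pm_neq = partner_neq[OF M] and pn_neq = partner_neq[OF N]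
  and pm_edge = partner_edge[OF M] and pn_edge = partner_edge[OF N]
  and pm_pm = partner_partner[OF M] and pn_pn = partner_partner[OF N]
  and pm_eqI = partner_eqI[OF M] and pn_eqI = partner_eqI[OF N]

lemma M_edge_at: "e \<in> M \<Longrightarrow> v \<in> e \<Longrightarrow> v < n \<and> e = {v, pm v}"
  using partner_unique[OF M] Kedges_elem_lt perfect_matching_subset_Kedges[OF M] by blast

lemma N_edge_at: "e \<in> N \<Longrightarrow> v \<in> e \<Longrightarrow> v < n \<and> e = {v, pn v}"
  using partner_unique[OF N] Kedges_elem_lt perfect_matching_subset_Kedges[OF N] by blast

definition moved :: "nat set" where
  "moved = {v. v < n \<and> pm v \<noteq> pn v}"

definition dir :: "nat set \<Rightarrow> real" where
  "dir e = chi N e - chi M e"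

lemma moved_lt: "v \<in> moved \<Longrightarrow> v < n"
  unfolding moved_def by simp

lemma moved_pm_neq_pn: "v \<in> moved \<Longrightarrow> pm v \<noteq> pn v"
  unfolding moved_def by simp

lemma moved_pm: "v \<in> moved \<Longrightarrow> pm v \<in> moved"
proof -
  assume v: "v \<in> moved"
  hence "pn (pm v) \<noteq> v" using pn_pn[OF pm_lt] moved_lt moved_pm_neq_pn by metis
  thus ?thesis using v pm_lt pm_pm unfolding moved_def by auto
qed

lemma moved_pn: "v \<in> moved \<Longrightarrow> pn v \<in> moved"
proof -
  assume v: "v \<in> moved"
  hence "pm (pn v) \<noteq> v" using pm_pm[OF pn_lt] moved_lt moved_pm_neq_pn by metis
  thus ?thesis using v pn_lt pn_pn unfolding moved_def by auto
qed

lemma M_edge_notin_N: "v \<in> moved \<Longrightarrow> {v, pm v} \<notin> N"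
  using pn_eqI moved_lt moved_pm_neq_pn by metis

lemma N_edge_notin_M: "v \<in> moved \<Longrightarrow> {v, pn v} \<notin> M"
  using pm_eqI moved_lt moved_pm_neq_pn by metis

lemma M_only_edge:
  assumes "e \<in> M" "e \<notin> N" "v \<in> e"
  shows "v \<in> moved \<and> e = {v, pm v}"
proof -
  have v: "v < n" "e = {v, pm v}" using M_edge_at[OF assms(1,3)] by simp_all
  hence "pm v \<noteq> pn v" using assms(2) pn_edge[OF v(1)] by auto
  thus ?thesis using v unfolding moved_def by simp
qed

lemma N_only_edge:
  assumes "e \<in> N" "e \<notin> M" "v \<in> e"
  shows "v \<in> moved \<and> e = {v, pn v}"
proof -
  have v: "v < n" "e = {v, pn v}" using N_edge_at[OF assms(1,3)] by simp_all
  hence "pm v \<noteq> pn v" using assms(2) pm_edge[OF v(1)] by auto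
  thus ?thesis using v unfolding moved_def by simp
qed

lemma dir_neq_0_iff: "dir e \<noteq> 0 \<longleftrightarrow> (e \<in> M \<longleftrightarrow> e \<notin> N)"
  unfolding dir_def chi_def by auto

lemma dir_M_edge: "v \<in> moved \<Longrightarrow> dir {v, pm v} = -1"
  unfolding dir_def chi_def using pm_edge[OF moved_lt] M_edge_notin_N by simp

lemma dir_N_edge: "v \<in> moved \<Longrightarrow> dir {v, pn v} = 1"
  unfolding dir_def chi_def using pn_edge[OF moved_lt] N_edge_notin_M by simp

lemma dir_RE: "dir \<in> RE n"
  unfolding RE_def dir_def chi_def
  using perfect_matching_subset_Kedges[OF M] perfect_matching_subset_Kedges[OF N] by auto

lemma dir_kerA: "kerA n dir"
  unfolding kerA_def dir_def xsum_def
  using xsum_chi_cut_singleton[OF M] xsum_chi_cut_singleton[OF N]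
  by (simp add: sum_subtractf xsum_def)

lemma dir_neq_0_if_neq: "M \<noteq> N \<Longrightarrow> dir \<noteq> (\<lambda>_. 0)"
  using perfect_matching_subset_imp_eq[OF M N] dir_neq_0_iff by (metis subsetI)

text \<open>\<open>blockM a\<close> is the path of \<open>M \<triangle> N\<close> made of the \<open>M\<close>-edge at \<open>a\<close> and the two \<open>N\<close>-edges
  adjacent to it; \<open>blockN b\<close> is the dual path around the \<open>N\<close>-edge at \<open>b\<close>.\<close>
definition blockM :: "nat \<Rightarrow> nat set" where
  "blockM a = {pn a, a, pm a, pn (pm a)}"

definition blockN :: "nat \<Rightarrow> nat set" where
  "blockN b = {pm b, b, pn b, pm (pn b)}"

lemma distinct_blockM:
  assumes a: "a \<in> moved"
  shows "distinct [pn a, a, pm a, pn (pm a)]"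
proof -
  have a': "pm a \<in> moved" using moved_pm[OF a] .
  have "pn (pm a) \<noteq> pn a" using pn_pn[OF moved_lt[OF a]] pn_pn[OF moved_lt[OF a']]
    pm_neq[OF moved_lt[OF a]] by metis
  moreover have "pn (pm a) \<noteq> a"
    using moved_pm_neq_pn[OF a'] pm_pm[OF moved_lt[OF a]] by simp
  ultimately show ?thesis
    using pn_neq[OF moved_lt[OF a]] pm_neq[OF moved_lt[OF a]] pn_neq[OF moved_lt[OF a']]
      moved_pm_neq_pn[OF a] by auto
qed

lemma distinct_blockN:
  assumes b: "b \<in> moved"
  shows "distinct [pm b, b, pn b, pm (pn b)]"
proof -
  have b': "pn b \<in> moved" using moved_pn[OF b] .
  have "pm (pn b) \<noteq> pm b" using pm_pm[OF moved_lt[OF b]] pm_pm[OF moved_lt[OF b']]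
    pn_neq[OF moved_lt[OF b]] by metis
  moreover have "pm (pn b) \<noteq> b"
    using moved_pm_neq_pn[OF b'] pn_pn[OF moved_lt[OF b]] by simp
  ultimately show ?thesis
    using pn_neq[OF moved_lt[OF b]] pm_neq[OF moved_lt[OF b]] pm_neq[OF moved_lt[OF b']]
      moved_pm_neq_pn[OF b] by auto
qed

lemma blockM_subset_moved: "a \<in> moved \<Longrightarrow> blockM a \<subseteq> moved"
  unfolding blockM_def using moved_pm moved_pn by auto

lemma blockN_subset_moved: "b \<in> moved \<Longrightarrow> blockN b \<subseteq> moved"
  unfolding blockN_def using moved_pm moved_pn by auto

lemma card_blocks:
  assumes "a \<in> moved" "b \<in> moved" "blockM a \<inter> blockN b = {}"
  shows "card (blockM a \<union> blockN b) = 8"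
proof -
  have "card (blockM a) = 4" "card (blockN b) = 4"
    using distinct_card[OF distinct_blockM[OF assms(1)]]
      distinct_card[OF distinct_blockN[OF assms(2)]]
    unfolding blockM_def blockN_def by simp_all
  thus ?thesis using assms(3) card_Un_disjoint[of "blockM a" "blockN b"]
    by (simp add: blockM_def blockN_def)
qed

definition has_spare_vertices :: bool where
  "has_spare_vertices \<longleftrightarrow> (\<forall>a\<in>moved. \<forall>b\<in>moved.
     blockM a \<inter> blockN b = {} \<longrightarrow> (\<exists>p<n. p \<notin> blockM a \<union> blockN b))"

lemma has_spare_vertices_if_card_moved_lt: "card moved < 8 \<Longrightarrow> has_spare_vertices"
proof -
  assume "card moved < 8"
  moreover have "card (blockM a \<union> blockN b) \<le> card moved" if "a \<in> moved" "b \<in> moved" for a b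
    using that blockM_subset_moved blockN_subset_moved
    by (intro card_mono) (auto simp: moved_def)
  ultimately show ?thesis unfolding has_spare_vertices_def using card_blocks by (metis not_le)
qed

lemma has_spare_vertices_if_neq_8: "n \<noteq> 8 \<Longrightarrow> has_spare_vertices"
proof -
  assume "n \<noteq> 8"
  have "blockM a \<union> blockN b \<noteq> {..<n}"
    if "a \<in> moved" "b \<in> moved" "blockM a \<inter> blockN b = {}" for a b
    using card_blocks[OF that] \<open>n \<noteq> 8\<close> by (metis card_lessThan)
  moreover have "blockM a \<union> blockN b \<subseteq> {..<n}" if "a \<in> moved" "b \<in> moved" for a b
    using that blockM_subset_moved blockN_subset_moved moved_lt by blast
  ultimately show ?thesis unfolding has_spare_vertices_def by blast
qed

text \<open>Given disjoint blocks and a vertex \<open>p\<close> outside both, the odd set \<open>{p, a, pm a, b, pn b}\<close>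
  spans exactly one \<open>M\<close>-edge and one \<open>N\<close>-edge of \<open>M \<triangle> N\<close>.\<close>
context
  fixes a b p :: nat
  assumes a: "a \<in> moved" and b: "b \<in> moved" and disj: "blockM a \<inter> blockN b = {}"
    and p: "p < n" "p \<notin> blockM a \<union> blockN b"
begin

private lemma five_set_partners:
  "distinct [p, a, pm a, b, pn b]"
  "x \<in> {p, a, pm a, b, pn b} \<Longrightarrow> pm x \<in> {p, a, pm a, b, pn b} \<Longrightarrow> {x, pm x} = {a, pm a}"
  "x \<in> {p, a, pm a, b, pn b} \<Longrightarrow> pn x \<in> {p, a, pm a, b, pn b} \<Longrightarrow> {x, pn x} = {b, pn b}"
proof -
  let ?Q = "{a, pm a, b, pn b}"
  note dA = distinct_blockM[OF a] and dB = distinct_blockN[OF b]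
  have aa: "pm (pm a) = a" and bb: "pn (pn b) = b"
    using pm_pm[OF moved_lt[OF a]] pn_pn[OF moved_lt[OF b]] .
  have "pm ` ?Q \<subseteq> blockM a \<union> blockN b" "pn ` ?Q \<subseteq> blockM a \<union> blockN b"
    unfolding blockM_def blockN_def using aa bb by auto
  hence "pm p \<notin> ?Q" "pn p \<notin> ?Q"
    using p pm_pm[OF p(1)] pn_pn[OF p(1)] by (metis image_eqI subsetD)+
  moreover have "pm b \<notin> ?Q" "pm (pn b) \<notin> ?Q" "pn a \<notin> ?Q" "pn (pm a) \<notin> ?Q"
    using dA dB disj unfolding blockM_def blockN_def by auto
  moreover have "p \<notin> ?Q" "pm b \<noteq> p" "pm (pn b) \<noteq> p" "pn a \<noteq> p" "pn (pm a) \<noteq> p"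
    using p(2) unfolding blockM_def blockN_def by auto
  moreover have "a \<notin> {b, pn b}" "pm a \<notin> {b, pn b}"
    using disj unfolding blockM_def blockN_def by auto
  ultimately show "distinct [p, a, pm a, b, pn b]"
    "x \<in> {p, a, pm a, b, pn b} \<Longrightarrow> pm x \<in> {p, a, pm a, b, pn b} \<Longrightarrow> {x, pm x} = {a, pm a}"
    "x \<in> {p, a, pm a, b, pn b} \<Longrightarrow> pn x \<in> {p, a, pm a, b, pn b} \<Longrightarrow> {x, pn x} = {b, pn b}"
    using dA dB aa bb pm_neq[OF p(1)] pn_neq[OF p(1)] by (auto simp: insert_commute)
qed

lemma odd_set_five_set: "odd_set n {p, a, pm a, b, pn b}"
proof -
  have "card {p, a, pm a, b, pn b} = 5"
    using distinct_card[OF five_set_partners(1)] by simp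
  moreover have "pn a \<notin> {p, a, pm a, b, pn b}"
    using five_set_partners(1) five_set_partners(3)[of a] by (auto simp: doubleton_eq_iff)
  moreover have "{p, a, pm a, b, pn b} \<subseteq> {..<n}"
    using p(1) a b moved_lt moved_pm moved_pn by auto
  ultimately show ?thesis
    unfolding odd_set_def using pn_lt[OF moved_lt[OF a]] by auto
qed

lemma xsum_cut_five_set:
  assumes z: "kerA n z" and supp: "\<And>e. z e \<noteq> 0 \<Longrightarrow> dir e \<noteq> 0"
  shows "xsum z (cut n {p, a, pm a, b, pn b}) = -2 * (z {a, pm a} + z {b, pn b})"
proof -
  let ?S = "{p, a, pm a, b, pn b}"
  have "{a, pm a} \<noteq> {b, pn b}" using five_set_partners(1) by (auto simp: doubleton_eq_iff)
  moreover have "(\<Sum>e\<in>{e\<in>Kedges n. e \<subseteq> ?S}. z e) = (\<Sum>e\<in>{{a, pm a}, {b, pn b}}. z e)"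
  proof (rule sum.mono_neutral_right)
    show "{{a, pm a}, {b, pn b}} \<subseteq> {e\<in>Kedges n. e \<subseteq> ?S}"
      using pm_edge[OF moved_lt[OF a]] pn_edge[OF moved_lt[OF b]]
        perfect_matching_subset_Kedges[OF M] perfect_matching_subset_Kedges[OF N] by auto
    have "e = {a, pm a} \<or> e = {b, pn b}" if e: "e \<in> Kedges n" "e \<subseteq> ?S" "dir e \<noteq> 0" for e
    proof -
      obtain v where v: "v \<in> e" using e(1) unfolding Kedges_def by auto
      show ?thesis
      proof (cases "e \<in> M")
        case True
        hence "e = {v, pm v}" using M_only_edge[OF _ _ v] e(3) unfolding dir_neq_0_iff by blast
        thus ?thesis using five_set_partners(2)[of v] e(2) by simp
      next
        case False
        hence "e = {v, pn v}" using N_only_edge[OF _ _ v] e(3) unfolding dir_neq_0_iff by blast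
        thus ?thesis using five_set_partners(3)[of v] e(2) by simp
      qed
    qed
    thus "\<forall>e\<in>{e\<in>Kedges n. e \<subseteq> ?S} - {{a, pm a}, {b, pn b}}. z e = 0" using supp by blast
  qed (simp add: finite_Kedges)
  moreover have "?S \<subseteq> {..<n}" using odd_set_five_set unfolding odd_set_def by blast
  ultimately show ?thesis using xsum_cut_kerA[OF z] by simp
qed

end

context
  fixes y :: "nat set \<Rightarrow> real"
  assumes y_kerA: "kerA n y" and y_supp: "\<And>e. y e \<noteq> 0 \<Longrightarrow> dir e \<noteq> 0"
begin

lemma balance_at_moved:
  assumes v: "v \<in> moved"
  shows "y {v, pm v} + y {v, pn v} = 0"
proof -
  have "{v, pm v} \<noteq> {v, pn v}"
    using moved_pm_neq_pn[OF v] pm_neq[OF moved_lt[OF v]] by (auto simp: doubleton_eq_iff)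
  moreover have "(\<Sum>e\<in>{e\<in>Kedges n. v \<in> e}. y e) = (\<Sum>e\<in>{{v, pm v}, {v, pn v}}. y e)"
  proof (rule sum.mono_neutral_right)
    show "{{v, pm v}, {v, pn v}} \<subseteq> {e\<in>Kedges n. v \<in> e}"
      using pm_edge[OF moved_lt[OF v]] pn_edge[OF moved_lt[OF v]]
        perfect_matching_subset_Kedges[OF M] perfect_matching_subset_Kedges[OF N] by auto
    have "dir e = 0" if "v \<in> e" "e \<noteq> {v, pm v}" "e \<noteq> {v, pn v}" for e
      using that M_edge_at N_edge_at unfolding dir_def chi_def by auto
    thus "\<forall>e\<in>{e\<in>Kedges n. v \<in> e} - {{v, pm v}, {v, pn v}}. y e = 0" using y_supp by blast
  qed (simp add: finite_Kedges)
  moreover have "xsum y (cut n {v}) = 0" using y_kerA moved_lt[OF v] unfolding kerA_def by simp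
  ultimately show ?thesis unfolding xsum_def cut_singleton by simp
qed

lemma M_edge_weight_pn:
  assumes v: "v \<in> moved"
  shows "y {pn v, pm (pn v)} = y {v, pm v}"
  using balance_at_moved[OF v] balance_at_moved[OF moved_pn[OF v]] pn_pn[OF moved_lt[OF v]]
  by (simp add: insert_commute)

lemma M_edge_weight_pm: "v < n \<Longrightarrow> y {pm v, pm (pm v)} = y {v, pm v}"
  using pm_pm by (simp add: insert_commute)

lemma M_edge_weight_blockM:
  assumes a: "a \<in> moved" and x: "x \<in> blockM a"
  shows "y {x, pm x} = y {a, pm a}"
  using x M_edge_weight_pn[OF a] M_edge_weight_pm[OF moved_lt[OF a]]
    M_edge_weight_pn[OF moved_pm[OF a]]
  unfolding blockM_def by auto

lemma M_edge_weight_blockN: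
  assumes b: "b \<in> moved" and x: "x \<in> blockN b"
  shows "y {x, pm x} = y {b, pm b}"
  using x M_edge_weight_pn[OF b] M_edge_weight_pm[OF moved_lt[OF b]]
    M_edge_weight_pm[OF moved_lt[OF moved_pn[OF b]]]
  unfolding blockN_def by auto

text \<open>Within a block the weights agree by the degree equations, across disjoint blocks by the
  five-vertex odd set.\<close>
lemma M_edge_weights_eq:
  assumes spare: has_spare_vertices
    and y_odd: "\<And>S. odd_set n S \<Longrightarrow> xsum dir (cut n S) = 0 \<Longrightarrow> xsum y (cut n S) = 0"
    and a: "a \<in> moved" and b: "b \<in> moved"
  shows "y {a, pm a} = y {b, pm b}"
proof (cases "blockM a \<inter> blockN b = {}")
  case False
  then obtain x where "x \<in> blockM a" "x \<in> blockN b" by blast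
  thus ?thesis using M_edge_weight_blockM[OF a] M_edge_weight_blockN[OF b] by metis
next
  case True
  then obtain p where p: "p < n" "p \<notin> blockM a \<union> blockN b"
    using spare a b unfolding has_spare_vertices_def by blast
  note five = xsum_cut_five_set[OF a b True p]
  have "xsum dir (cut n {p, a, pm a, b, pn b}) = 0"
    using five[OF dir_kerA] dir_M_edge[OF a] dir_N_edge[OF b] by simp
  hence "y {a, pm a} + y {b, pn b} = 0"
    using y_odd[OF odd_set_five_set[OF a b True p]] five[OF y_kerA y_supp] by simp
  thus ?thesis using balance_at_moved[OF b] by simp
qed

lemma eq_scaled_dir:
  assumes spare: has_spare_vertices
    and y_odd: "\<And>S. odd_set n S \<Longrightarrow> xsum dir (cut n S) = 0 \<Longrightarrow> xsum y (cut n S) = 0"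
  shows "\<exists>c. y = (\<lambda>e. c * dir e)"
proof -
  obtain c where c: "\<And>v. v \<in> moved \<Longrightarrow> y {v, pm v} = c"
    using M_edge_weights_eq[OF spare y_odd] by metis
  have "y e = - c * dir e" for e
  proof (cases "dir e = 0")
    case False
    then obtain v where v: "v \<in> e" using dir_RE unfolding RE_def Kedges_def by force
    show ?thesis
    proof (cases "e \<in> M")
      case True
      hence "v \<in> moved" "e = {v, pm v}" using M_only_edge[OF _ _ v] False dir_neq_0_iff by blast+
      thus ?thesis using c dir_M_edge by simp
    next
      case False
      hence "v \<in> moved" "e = {v, pn v}" using N_only_edge[OF _ _ v] \<open>dir e \<noteq> 0\<close> dir_neq_0_iff
        by blast+
      thus ?thesis using c dir_N_edge balance_at_moved by (metis add_eq_0_iff mult_1_right)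
    qed
  qed (use y_supp in fastforce)
  thus ?thesis by blast
qed

end

lemma circuit_dir:
  assumes "M \<noteq> N" and spare: has_spare_vertices
  shows "circuit n dir"
  unfolding circuit_def
proof (intro conjI dir_RE dir_neq_0_if_neq[OF \<open>M \<noteq> N\<close>] dir_kerA notI)
  assume "\<exists>y\<in>RE n. y \<noteq> (\<lambda>_. 0) \<and> kerA n y \<and> suppB n y \<subset> suppB n dir"
  then obtain y where y: "y \<in> RE n" "y \<noteq> (\<lambda>_. 0)" "kerA n y" "suppB n y \<subset> suppB n dir"
    by blast
  have "dir e \<noteq> 0" if "y e \<noteq> 0" for e
    using y(1,4) that unfolding RE_def suppB_def by blast
  moreover have "xsum y (cut n S) = 0" if "odd_set n S" "xsum dir (cut n S) = 0" for S
    using y(4) that unfolding suppB_def by blast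
  ultimately obtain c where c: "y = (\<lambda>e. c * dir e)"
    using eq_scaled_dir[OF y(3) _ spare] by blast
  hence "c \<noteq> 0" using y(2) by auto
  hence "suppB n y = suppB n dir" unfolding c suppB_def xsum_scale by simp
  thus False using y(4) by simp
qed

lemma circuit_step_chi:
  assumes "M \<noteq> N" and "circuit n dir"
  shows "circuit_step n (P_perfmatch n) (chi M) (chi N)"
  unfolding circuit_step_def
proof (intro conjI exI[of _ dir] exI[of _ "1::real"] allI impI notI)
  obtain e where e: "e \<in> M" "e \<notin> N"
    using perfect_matching_subset_imp_eq[OF M N] \<open>M \<noteq> N\<close> by blast
  fix \<beta> :: real assume "\<beta> > 1" "(\<lambda>e. chi M e + \<beta> * dir e) \<in> P_perfmatch n"
  thus False using P_perfmatch_nonneg[of _ n e] e unfolding dir_def chi_def by fastforce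
qed (simp_all add: assms chi_in_P_perfmatch M N dir_def)

lemma circuit_dir_if_circuit_step:
  assumes "circuit_step n (P_perfmatch n) (chi M) (chi N)"
  shows "circuit n dir"
proof -
  obtain c \<alpha> where c: "circuit n c" "\<alpha> > 0" "chi N = (\<lambda>e. chi M e + \<alpha> * c e)"
    using assms unfolding circuit_step_def by blast
  have "dir = (\<lambda>e. \<alpha> * c e)" unfolding dir_def c(3) by simp
  thus ?thesis using circuit_scale[OF c(1)] c(2) by simp
qed

end

subsection \<open>Alternating squares\<close>

lemma inner_sum_alternating_square:
  fixes z :: "nat set \<Rightarrow> real"
  assumes dist: "distinct [c0, c1, c2, c3]" and lt: "c0 < n" "c1 < n" "c2 < n" "c3 < n"
    and supp: "\<And>e. z e \<noteq> 0 \<Longrightarrow> e \<in> {{c0, c1}, {c1, c2}, {c2, c3}, {c3, c0}}"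
    and val: "z {c0, c1} = s" "z {c1, c2} = -s" "z {c2, c3} = s" "z {c3, c0} = -s"
    and odd: "odd (card (S \<inter> {c0, c1, c2, c3}))"
  shows "(\<Sum>e\<in>{e\<in>Kedges n. e \<subseteq> S}. z e) = 0"
proof -
  define C where "C = {{c0, c1}, {c1, c2}, {c2, c3}, {c3, c0}}"
  have "(\<Sum>e\<in>{e\<in>Kedges n. e \<subseteq> S}. z e) = (\<Sum>e\<in>{e\<in>C. e \<subseteq> S}. z e)"
  proof (rule sum.mono_neutral_right)
    show "{e\<in>C. e \<subseteq> S} \<subseteq> {e\<in>Kedges n. e \<subseteq> S}"
      unfolding C_def using dist lt by (auto simp: doubleton_in_Kedges_iff)
  qed (use supp in \<open>auto simp: C_def finite_Kedges\<close>)
  also have "\<dots> = (\<Sum>e\<in>C. if e \<subseteq> S then z e else 0)"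
    by (rule sum.inter_filter) (simp add: C_def)
  also have "\<dots> = (if {c0, c1} \<subseteq> S then s else 0) + (if {c1, c2} \<subseteq> S then -s else 0)
      + (if {c2, c3} \<subseteq> S then s else 0) + (if {c3, c0} \<subseteq> S then -s else 0)"
    unfolding C_def using dist val by (auto simp: doubleton_eq_iff)
  also have "\<dots> = 0"
    using odd dist
    by (cases "c0 \<in> S"; cases "c1 \<in> S"; cases "c2 \<in> S"; cases "c3 \<in> S"; simp add: Int_insert_right)
  finally show ?thesis .
qed

context two_matchings
begin

text \<open>The alternating 4-cycle \<open>a, pm a, pn (pm a) = pm (pn a), pn a\<close> is a component of
  \<open>M \<triangle> N\<close>, with vertex set \<open>blockM a\<close>.\<close>
definition square_at :: "nat \<Rightarrow> bool" where
  "square_at a \<longleftrightarrow> a \<in> moved \<and> pm (pn a) = pn (pm a)"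

lemma square_at_moved: "square_at a \<Longrightarrow> a \<in> moved"
  unfolding square_at_def by simp

lemma square_at_pm_pn_pm: "square_at a \<Longrightarrow> pm (pn (pm a)) = pn a"
  unfolding square_at_def using pm_pm[OF pn_lt[OF moved_lt]] by metis

lemma blockM_closed:
  assumes "square_at a" "x \<in> blockM a"
  shows "pm x \<in> blockM a" "pn x \<in> blockM a"
proof -
  have a: "a < n" "pm a < n" using assms(1) moved_lt moved_pm unfolding square_at_def by auto
  show "pm x \<in> blockM a" "pn x \<in> blockM a"
    using assms square_at_pm_pn_pm[OF assms(1)] pm_pm[OF a(1)] pn_pn[OF a(1)] pn_pn[OF a(2)]
    unfolding blockM_def square_at_def by auto
qed

lemma square_at_if_closed:
  assumes a: "a \<in> moved" and closed: "pm ` blockM a \<subseteq> blockM a"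
  shows "square_at a"
proof -
  let ?x = "pn (pm a)"
  have "pm ?x \<in> blockM a" using closed unfolding blockM_def by auto
  moreover have "pm ?x \<noteq> a" "pm ?x \<noteq> pm a" "pm ?x \<noteq> ?x"
    using distinct_blockM[OF a] pm_pm pn_lt pm_lt moved_lt[OF a] pm_neq
    by (metis distinct_length_2_or_more)+
  ultimately have "pm ?x = pn a" unfolding blockM_def by auto
  hence "?x = pm (pn a)" using pm_pm[OF pn_lt[OF pm_lt[OF moved_lt[OF a]]]] by metis
  thus ?thesis using a unfolding square_at_def by simp
qed

lemma square_at_pn_if_closed:
  assumes b: "b \<in> moved" and closed: "pn ` blockN b \<subseteq> blockN b"
  shows "square_at (pn b)" "blockM (pn b) = blockN b"
proof -
  let ?x = "pm (pn b)"
  have "pn ?x \<in> blockN b" using closed unfolding blockN_def by auto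
  moreover have "pn ?x \<noteq> b" "pn ?x \<noteq> pn b" "pn ?x \<noteq> ?x"
    using distinct_blockN[OF b] pn_pn pn_lt pm_lt moved_lt[OF b] pn_neq
    by (metis distinct_length_2_or_more)+
  ultimately have x: "pn ?x = pm b" unfolding blockN_def by auto
  thus "square_at (pn b)"
    using moved_pn[OF b] pn_pn[OF moved_lt[OF b]] unfolding square_at_def by simp
  show "blockM (pn b) = blockN b"
    using x pn_pn[OF moved_lt[OF b]] unfolding blockM_def blockN_def by auto
qed

text \<open>Without spare vertices, two disjoint blocks exhaust the vertex set; since \<open>pm\<close> and \<open>pn\<close>
  are involutions and each block is invariant under one of them, both blocks are invariant under
  both, hence are squares.\<close>
lemma squares_if_not_spare:
  assumes "\<not> has_spare_vertices"
  obtains a a' where "square_at a" "square_at a'" "blockM a \<inter> blockM a' = {}"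
    "{..<n} \<subseteq> blockM a \<union> blockM a'"
proof -
  obtain a b where a: "a \<in> moved" and b: "b \<in> moved" and disj: "blockM a \<inter> blockN b = {}"
    and cover: "{..<n} \<subseteq> blockM a \<union> blockN b"
    using assms unfolding has_spare_vertices_def by auto
  have in_blocks: "x \<in> blockM a \<union> blockN b" if "x < n" for x using cover that by auto
  have pnA: "pn ` blockM a \<subseteq> blockM a"
    using pn_pn[OF moved_lt[OF a]] pn_pn[OF moved_lt[OF moved_pm[OF a]]]
    unfolding blockM_def by auto
  have pmB: "pm ` blockN b \<subseteq> blockN b"
    using pm_pm[OF moved_lt[OF b]] pm_pm[OF moved_lt[OF moved_pn[OF b]]]
    unfolding blockN_def by auto
  have blocks_lt: "x < n" if "x \<in> blockM a \<union> blockN b" for x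
    using that blockM_subset_moved[OF a] blockN_subset_moved[OF b] moved_lt by blast
  have "pm ` blockM a \<subseteq> blockM a"
  proof (intro image_subsetI)
    fix x assume x: "x \<in> blockM a"
    have "pm x \<notin> blockN b"
      using pmB x disj pm_pm[OF blocks_lt, of x] by (metis IntI UnI1 empty_iff image_eqI subsetD)
    thus "pm x \<in> blockM a" using in_blocks[OF pm_lt[OF blocks_lt]] x by blast
  qed
  moreover have "pn ` blockN b \<subseteq> blockN b"
  proof (intro image_subsetI)
    fix x assume x: "x \<in> blockN b"
    have "pn x \<notin> blockM a"
      using pnA x disj pn_pn[OF blocks_lt, of x] by (metis IntI UnI2 empty_iff image_eqI subsetD)
    thus "pn x \<in> blockN b" using in_blocks[OF pn_lt[OF blocks_lt]] x by blast
  qed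
  ultimately show ?thesis
    using that[of a "pn b"] square_at_if_closed[OF a] square_at_pn_if_closed[OF b] disj cover
    by simp
qed

definition dir_on :: "nat set \<Rightarrow> nat set \<Rightarrow> real" where
  "dir_on A e = (if e \<subseteq> A then dir e else 0)"

lemma dir_edge_within_square:
  assumes "square_at a" "dir e \<noteq> 0" "v \<in> e" "v \<in> blockM a"
  shows "e \<subseteq> blockM a"
proof (cases "e \<in> M")
  case True
  hence "e = {v, pm v}" using M_only_edge[OF _ _ assms(3)] assms(2) dir_neq_0_iff by blast
  thus ?thesis using blockM_closed[OF assms(1,4)] assms(4) by simp
next
  case False
  hence "e = {v, pn v}" using N_only_edge[OF _ _ assms(3)] assms(2) dir_neq_0_iff by blast
  thus ?thesis using blockM_closed[OF assms(1,4)] assms(4) by simp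
qed

lemma kerA_dir_on_square:
  assumes a: "square_at a"
  shows "kerA n (dir_on (blockM a))"
  unfolding kerA_def
proof (intro allI impI)
  fix v assume "v < n"
  show "xsum (dir_on (blockM a)) (cut n {v}) = 0"
  proof (cases "v \<in> blockM a")
    case True
    hence "xsum (dir_on (blockM a)) (cut n {v}) = xsum dir (cut n {v})"
      unfolding xsum_def cut_singleton dir_on_def
      using dir_edge_within_square[OF a] by (intro sum.cong) auto
    thus ?thesis using dir_kerA \<open>v < n\<close> unfolding kerA_def by simp
  next
    case False
    thus ?thesis unfolding xsum_def cut_singleton dir_on_def by (intro sum.neutral) auto
  qed
qed

lemma inner_sum_dir_on_square:
  assumes a: "square_at a" and odd: "odd (card (S \<inter> blockM a))"
  shows "(\<Sum>e\<in>{e\<in>Kedges n. e \<subseteq> S}. dir_on (blockM a) e) = 0"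
proof (rule inner_sum_alternating_square)
  have a': "pm a \<in> moved" "pn (pm a) \<in> moved"
    using a moved_pm moved_pn unfolding square_at_def by auto
  note pmpnpm = square_at_pm_pn_pm[OF a] and moved_a = square_at_moved[OF a]
  show "distinct [a, pm a, pn (pm a), pn a]" using distinct_blockM[OF moved_a] by auto
  show "a < n" "pm a < n" "pn (pm a) < n" "pn a < n"
    using moved_lt moved_a a' moved_pn[OF moved_a] by auto
  show "dir_on (blockM a) {a, pm a} = - 1" "dir_on (blockM a) {pm a, pn (pm a)} = - (- 1)"
    "dir_on (blockM a) {pn (pm a), pn a} = - 1" "dir_on (blockM a) {pn a, a} = - (- 1)"
    using dir_M_edge[OF moved_a] dir_N_edge[OF a'(1)] dir_M_edge[OF a'(2)] dir_N_edge[OF moved_a]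
    unfolding dir_on_def blockM_def pmpnpm by (simp_all add: insert_commute)
  show "odd (card (S \<inter> {a, pm a, pn (pm a), pn a}))"
    using odd unfolding blockM_def by (simp add: insert_commute)
  fix e assume "dir_on (blockM a) e \<noteq> 0"
  hence e: "dir e \<noteq> 0" "e \<subseteq> blockM a" unfolding dir_on_def by (auto split: if_splits)
  then obtain v where v: "v \<in> e" using dir_RE unfolding RE_def Kedges_def by force
  hence "v \<in> blockM a" and e_cases: "e = {v, pm v} \<or> e = {v, pn v}"
    using e M_only_edge N_only_edge dir_neq_0_iff by blast+
  hence "v = pn a \<or> v = a \<or> v = pm a \<or> v = pn (pm a)" unfolding blockM_def by simp
  moreover have "pm (pm a) = a" "pn (pn a) = a" "pn (pn (pm a)) = pm a" "pm (pn a) = pn (pm a)"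
    using pm_pm pn_pn moved_lt moved_a a' a unfolding square_at_def by auto
  ultimately show "e \<in> {{a, pm a}, {pm a, pn (pm a)}, {pn (pm a), pn a}, {pn a, a}}"
    using e_cases pmpnpm by (elim disjE; simp add: insert_commute)
qed

end

locale square_cover = two_matchings +
  fixes a a' :: nat
  assumes square: "square_at a" "square_at a'"
    and disjoint: "blockM a \<inter> blockM a' = {}"
    and cover: "{..<n} \<subseteq> blockM a \<union> blockM a'"
begin

lemma blocks_lt: "x \<in> blockM a \<union> blockM a' \<Longrightarrow> x < n"
  using blockM_subset_moved square_at_moved square moved_lt by blast

definition middle :: "nat set set" where
  "middle = {e \<in> N. e \<subseteq> blockM a} \<union> {e \<in> M. e \<subseteq> blockM a'}"

lemma middle_edges_at:
  "v \<in> blockM a \<Longrightarrow> {e \<in> middle. v \<in> e} = {{v, pn v}}"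
  "v \<in> blockM a' \<Longrightarrow> {e \<in> middle. v \<in> e} = {{v, pm v}}"
  using blocks_lt N_edge_at M_edge_at pn_edge pm_edge blockM_closed[OF square(1)]
    blockM_closed[OF square(2)] disjoint
  unfolding middle_def by (auto 6 3)

lemma perfect_matching_middle: "perfect_matching n middle"
  unfolding perfect_matching_def
proof
  show "middle \<subseteq> Kedges n"
    unfolding middle_def
    using perfect_matching_subset_Kedges[OF M] perfect_matching_subset_Kedges[OF N] by auto
  show "\<forall>v<n. card {e \<in> middle. v \<in> e} = 1" using cover middle_edges_at by fastforce
qed

lemma partner_middle:
  "v \<in> blockM a \<Longrightarrow> partner middle v = pn v"
  "v \<in> blockM a' \<Longrightarrow> partner middle v = pm v"
  using partner_eqI[OF perfect_matching_middle blocks_lt] middle_edges_at by blast+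

lemma circuit_walk_2: "circuit_walk n (P_perfmatch n) (chi M) (chi N) 2"
proof -
  interpret first: two_matchings n M middle using M perfect_matching_middle by unfold_locales
  interpret second: two_matchings n middle N using perfect_matching_middle N by unfold_locales
  have small: "card A < 8" if "A \<subseteq> blockM x" for A x
  proof -
    have "card A \<le> card (blockM x)" using that by (intro card_mono) (simp_all add: blockM_def)
    also have "\<dots> \<le> 4" using card_length[of "[pn x, x, pm x, pn (pm x)]"] by (simp add: blockM_def)
    finally show ?thesis by simp
  qed
  have "first.moved \<subseteq> blockM a"
    using cover partner_middle(2) unfolding first.moved_def by fastforce
  moreover have "second.moved \<subseteq> blockM a'"
    using cover partner_middle(1) unfolding second.moved_def by fastforce
  ultimately have "card first.moved < 8" "card second.moved < 8" using small by blast+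
  hence spare: first.has_spare_vertices second.has_spare_vertices
    using first.has_spare_vertices_if_card_moved_lt second.has_spare_vertices_if_card_moved_lt by blast+
  have "{a, pn a} \<in> middle" "{a', pm a'} \<in> middle"
    using middle_edges_at[of a] middle_edges_at[of a'] unfolding blockM_def by auto
  hence "M \<noteq> middle" "middle \<noteq> N"
    using M_edge_notin_N N_edge_notin_M square_at_moved square by metis+
  hence "circuit_step n (P_perfmatch n) (chi M) (chi middle)"
    "circuit_step n (P_perfmatch n) (chi middle) (chi N)"
    using first.circuit_step_chi first.circuit_dir second.circuit_step_chi second.circuit_dir spare
    by blast+
  thus ?thesis
    using circuit_walk_Cons circuit_walk_refl[OF chi_in_P_perfmatch[OF N]]
    by (metis numeral_2_eq_2)
qed

lemma dir_eq_sum_dir_on: "dir e = dir_on (blockM a) e + dir_on (blockM a') e"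
proof (cases "dir e = 0")
  case False
  hence "e \<in> Kedges n" using dir_RE unfolding RE_def by blast
  then obtain v where v: "v \<in> e" "v < n" unfolding Kedges_def by blast
  hence "e \<subseteq> blockM a \<and> \<not> e \<subseteq> blockM a' \<or> e \<subseteq> blockM a' \<and> \<not> e \<subseteq> blockM a"
    using cover disjoint dir_edge_within_square[OF _ False v(1)] square by blast
  thus ?thesis unfolding dir_on_def by auto
qed (simp add: dir_on_def)

text \<open>An odd set meets one of the two squares in an odd number of vertices, and on that square
  the inner edge sum of \<open>dir\<close> cancels.\<close>
lemma suppB_dir_on_subset: "suppB n (dir_on (blockM a)) \<subseteq> suppB n dir"
proof -
  have "xsum dir (cut n S) \<noteq> 0"
    if S: "odd_set n S" and y: "xsum (dir_on (blockM a)) (cut n S) \<noteq> 0" for S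
  proof -
    have Sn: "S \<subseteq> {..<n}" using S unfolding odd_set_def by auto
    have "S = (S \<inter> blockM a) \<union> (S \<inter> blockM a')" using Sn cover by blast
    moreover have "finite S" using Sn finite_subset by blast
    ultimately have "card S = card (S \<inter> blockM a) + card (S \<inter> blockM a')"
      using disjoint card_Un_disjoint[of "S \<inter> blockM a" "S \<inter> blockM a'"] by fastforce
    moreover have "even (card (S \<inter> blockM a))"
      using y inner_sum_dir_on_square[OF square(1)]
        xsum_cut_kerA[OF kerA_dir_on_square[OF square(1)] Sn] by auto
    ultimately have "odd (card (S \<inter> blockM a'))" using S unfolding odd_set_def by auto
    hence "xsum (dir_on (blockM a')) (cut n S) = 0"
      using inner_sum_dir_on_square[OF square(2)]
        xsum_cut_kerA[OF kerA_dir_on_square[OF square(2)] Sn] by simp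
    moreover have "dir = (\<lambda>e. dir_on (blockM a) e + dir_on (blockM a') e)"
      using dir_eq_sum_dir_on by blast
    ultimately show ?thesis using y xsum_add[of "dir_on (blockM a)" "dir_on (blockM a')"] by simp
  qed
  thus ?thesis unfolding suppB_def dir_on_def by (auto split: if_splits)
qed

lemma not_circuit_dir: "\<not> circuit n dir"
proof
  assume dir: "circuit n dir"
  have "dir_on (blockM a) {a, pm a} = -1"
    using dir_M_edge[OF square_at_moved[OF square(1)]] unfolding dir_on_def blockM_def by simp
  hence "dir_on (blockM a) \<noteq> (\<lambda>_. 0)" by (metis zero_neq_neg_one)
  moreover have "dir_on (blockM a) \<in> RE n" using dir_RE unfolding RE_def dir_on_def by simp
  moreover have "suppB n (dir_on (blockM a)) \<subset> suppB n dir"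
  proof -
    have "{a', pm a'} \<in> Kedges n" "dir {a', pm a'} \<noteq> 0" "\<not> {a', pm a'} \<subseteq> blockM a"
      using pm_edge perfect_matching_subset_Kedges[OF M] dir_M_edge disjoint moved_lt
        square_at_moved[OF square(2)] unfolding blockM_def by auto
    hence "Inr {a', pm a'} \<in> suppB n dir - suppB n (dir_on (blockM a))"
      unfolding suppB_def dir_on_def by auto
    thus ?thesis using suppB_dir_on_subset by blast
  qed
  ultimately show False
    using dir kerA_dir_on_square[OF square(1)] unfolding circuit_def by blast
qed

end

subsection \<open>The circuit diameter\<close>

context two_matchings
begin

lemma circuit_walk_chi:
  "\<exists>l \<le> (if n = 8 then 2 else 1). circuit_walk n (P_perfmatch n) (chi M) (chi N) l"
proof (cases "M = N")
  case True
  thus ?thesis using circuit_walk_refl[OF chi_in_P_perfmatch[OF M]] by auto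
next
  case False
  show ?thesis
  proof (cases has_spare_vertices)
    case True
    hence "circuit_walk n (P_perfmatch n) (chi M) (chi N) 1"
      using circuit_walk_Cons circuit_step_chi[OF False circuit_dir[OF False]]
        circuit_walk_refl[OF chi_in_P_perfmatch[OF N]] by (metis One_nat_def)
    thus ?thesis by (intro exI[of _ 1]) simp
  next
    case False
    then obtain a a' where "square_cover n M N a a'"
      using squares_if_not_spare M N by (metis square_cover.intro square_cover_axioms.intro
        two_matchings.intro)
    hence "circuit_walk n (P_perfmatch n) (chi M) (chi N) 2" by (rule square_cover.circuit_walk_2)
    moreover have "n = 8" using False has_spare_vertices_if_neq_8 by blast
    ultimately show ?thesis by auto
  qed
qed

end

lemma circuit_distance_chi_le:
  assumes "perfect_matching n M" "perfect_matching n N"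
  shows "circuit_distance n (P_perfmatch n) (chi M) (chi N) \<le> (if n = 8 then 2 else 1)"
  using two_matchings.circuit_walk_chi[OF two_matchings.intro[OF assms]] circuit_distance_le
    le_trans by blast

lemma circuit_distance_chi_eq_1:
  assumes M: "perfect_matching n M" and N: "perfect_matching n N" and "M \<noteq> N" "n \<noteq> 8"
  shows "circuit_distance n (P_perfmatch n) (chi M) (chi N) = 1"
proof -
  have "\<not> circuit_walk n (P_perfmatch n) (chi M) (chi N) 0"
    using circuit_walk_0_imp_eq chi_inject \<open>M \<noteq> N\<close> by blast
  moreover obtain l where "l \<le> 1" "circuit_walk n (P_perfmatch n) (chi M) (chi N) l"
    using two_matchings.circuit_walk_chi[OF two_matchings.intro[OF M N]] \<open>n \<noteq> 8\<close> by auto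
  ultimately show ?thesis
    using circuit_distance_eqI[of n _ _ _ 1] by (metis less_one le_neq_implies_less)
qed

definition adjacent_pairing :: "nat \<Rightarrow> nat" where
  "adjacent_pairing v = (if even v then v + 1 else v - 1)"

definition crossed_pairing :: "nat \<Rightarrow> nat" where
  "crossed_pairing v = (if v < 4 then 3 - v else adjacent_pairing v)"

definition crossed_pairing_8 :: "nat \<Rightarrow> nat" where
  "crossed_pairing_8 v = (if v < 4 then 3 - v else 11 - v)"

lemma adjacent_pairing:
  assumes "even n" "v < n"
  shows "adjacent_pairing v < n" "adjacent_pairing v \<noteq> v"
    "adjacent_pairing (adjacent_pairing v) = v"
  using assms unfolding adjacent_pairing_def by (auto elim: oddE evenE) presburger

lemma crossed_pairing:
  assumes "even n" "n \<ge> 4" "v < n"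
  shows "crossed_pairing v < n \<and> crossed_pairing v \<noteq> v \<and> crossed_pairing (crossed_pairing v) = v"
proof (cases "v < 4")
  case True
  thus ?thesis using assms(2) unfolding crossed_pairing_def by auto presburger
next
  case False
  moreover have "adjacent_pairing v \<ge> 4" using False unfolding adjacent_pairing_def by presburger
  ultimately show ?thesis
    using adjacent_pairing[OF assms(1,3)] unfolding crossed_pairing_def by simp
qed

lemma crossed_pairing_8: "v < 8 \<Longrightarrow> crossed_pairing_8 v < 8 \<and> crossed_pairing_8 v \<noteq> v \<and>
    crossed_pairing_8 (crossed_pairing_8 v) = v"
  unfolding crossed_pairing_8_def by (auto split: if_splits; arith)

lemma two_distinct_perfect_matchings:
  assumes "even n" "n \<ge> 4"
  shows "perfect_matching n (matching_of n adjacent_pairing)"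
    "perfect_matching n (matching_of n crossed_pairing)"
    "matching_of n adjacent_pairing \<noteq> matching_of n crossed_pairing"
proof -
  note A = adjacent_pairing[OF assms(1)]
  have C: "v < n \<Longrightarrow> crossed_pairing v < n" "v < n \<Longrightarrow> crossed_pairing v \<noteq> v"
    "v < n \<Longrightarrow> crossed_pairing (crossed_pairing v) = v" for v
    using crossed_pairing[OF assms] by simp_all
  show "perfect_matching n (matching_of n adjacent_pairing)"
    "perfect_matching n (matching_of n crossed_pairing)"
    using perfect_matching_matching_of A C by blast+
  have "partner (matching_of n adjacent_pairing) 0 = 1"
    "partner (matching_of n crossed_pairing) 0 = 3"
    using partner_matching_of[OF A, of 0] partner_matching_of[OF C, of 0] assms(2)
    unfolding adjacent_pairing_def crossed_pairing_def by simp_all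
  thus "matching_of n adjacent_pairing \<noteq> matching_of n crossed_pairing" by auto
qed

lemma square_cover_8:
  "square_cover 8 (matching_of 8 adjacent_pairing) (matching_of 8 crossed_pairing_8) 0 4"
proof -
  let ?M = "matching_of 8 adjacent_pairing" and ?N = "matching_of 8 crossed_pairing_8"
  have pm: "perfect_matching 8 ?M" "\<And>v. v < 8 \<Longrightarrow> partner ?M v = adjacent_pairing v"
    using perfect_matching_matching_of partner_matching_of adjacent_pairing[of 8] by simp_all
  have pn: "perfect_matching 8 ?N" "\<And>v. v < 8 \<Longrightarrow> partner ?N v = crossed_pairing_8 v"
    using perfect_matching_matching_of[of 8 crossed_pairing_8]
      partner_matching_of[of 8 crossed_pairing_8] crossed_pairing_8 by simp_all
  interpret two_matchings 8 ?M ?N using pm(1) pn(1) by unfold_locales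
  have "pm 0 = 1" "pm 1 = 0" "pm 3 = 2" "pm 4 = 5" "pm 5 = 4" "pm 7 = 6"
    "pn 0 = 3" "pn 1 = 2" "pn 4 = 7" "pn 5 = 6"
    using pm(2) pn(2) unfolding adjacent_pairing_def crossed_pairing_8_def by simp_all
  thus ?thesis
    by unfold_locales (auto simp: square_at_def moved_def blockM_def)
qed

lemma circuit_distance_8:
  "circuit_distance 8 (P_perfmatch 8)
     (chi (matching_of 8 adjacent_pairing)) (chi (matching_of 8 crossed_pairing_8)) = 2"
proof -
  let ?M = "matching_of 8 adjacent_pairing" and ?N = "matching_of 8 crossed_pairing_8"
  interpret square_cover 8 ?M ?N 0 4 by (rule square_cover_8)
  have "?M \<noteq> ?N" using N_edge_notin_M pn_edge square_at_moved square(1) by (metis zero_less_numeral)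
  show ?thesis
  proof (rule circuit_distance_eqI[OF circuit_walk_2])
    fix l :: nat assume "l < 2"
    hence "l = 0 \<or> l = Suc 0" by auto
    thus "\<not> circuit_walk 8 (P_perfmatch 8) (chi ?M) (chi ?N) l"
      using circuit_walk_0_imp_eq circuit_walk_1_imp_step circuit_dir_if_circuit_step
        not_circuit_dir chi_inject \<open>?M \<noteq> ?N\<close> by blast
  qed
qed

lemma perfect_matchings_at_max_circuit_distance:
  assumes "even n" "n \<ge> 4"
  obtains M N where "perfect_matching n M" "perfect_matching n N"
    "circuit_distance n (P_perfmatch n) (chi M) (chi N) = (if n = 8 then 2 else 1)"
proof (cases "n = 8")
  case True
  have "perfect_matching 8 (matching_of 8 adjacent_pairing)"
    "perfect_matching 8 (matching_of 8 crossed_pairing_8)"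
    using square_cover.axioms(1)[OF square_cover_8] unfolding two_matchings_def by blast+
  thus ?thesis
    using that[of "matching_of 8 adjacent_pairing" "matching_of 8 crossed_pairing_8"]
      circuit_distance_8 True by simp
next
  case False
  thus ?thesis
    using that two_distinct_perfect_matchings[OF assms] circuit_distance_chi_eq_1 by simp
qed

theorem theorem2:
  fixes n :: nat
  assumes "even n" and "n \<ge> 4"
  shows "circuit_diameter n (P_perfmatch n) =
           (if n = 4 \<or> n = 6 then 1 else if n = 8 then 2 else 1)"
proof -
  obtain M N where M: "perfect_matching n M" and N: "perfect_matching n N"
    and dist: "circuit_distance n (P_perfmatch n) (chi M) (chi N) = (if n = 8 then 2 else 1)"
    using perfect_matchings_at_max_circuit_distance[OF assms] .
  have "circuit_diameter n (P_perfmatch n) = (if n = 8 then 2 else 1)"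
  proof (rule circuit_diameter_eqI)
    show "vertex_of (chi M) (P_perfmatch n)" "vertex_of (chi N) (P_perfmatch n)"
      using M N vertex_of_chi by blast+
    show "circuit_distance n (P_perfmatch n) x y \<le> (if n = 8 then 2 else 1)"
      if "vertex_of x (P_perfmatch n)" "vertex_of y (P_perfmatch n)" for x y
      using that circuit_distance_chi_le unfolding vertex_of_P_perfmatch_iff by blast
  qed (fact dist)
  thus ?thesis by simp
qed

end
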